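(* Let $\mathcal A$ be a finite union-closed family with $n=|\mathcal A|$ member-sets whose universe $U(\mathcal A)=\bigcup_{A\in\mathcal A}A$ has size $m$, and suppose $2^{m-1}<n\leq 2^m$. Then some element of $U(\mathcal A)$ is contained in at least $\tfrac{6}{13}|\mathcal A|$ member-sets of $\mathcal A$.
   Context: A family $\mathcal A$ of sets is union-closed if $A\cup B\in\mathcal A$ for all $A,B\in\mathcal A$. A family with $n$ member-sets on a universe of size $m$ satisfying $2^{m-1}<n\leq 2^m$ is called compact. *)

theory Defs
  imports Complex_Main
begin

definition union_closed :: "'a set set \<Rightarrow> bool" where
  "union_closed F \<longleftrightarrow> (\<forall>A\<in>F. \<forall>B\<in>F. A \<union> B \<in> F)"

end

theory Submission
  imports Defs
begin

text \<open>
If a member of size 1 or 2 exists, one of its elements lies in half of the family, as every set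
avoiding both elements injects into the sets containing both.
Otherwise double counting works: for every element x, the sets without x and the sets with x
are matched by adding x, up to the sets whose partner is missing from the family. Union-closedness
makes the unmatched "upward" partners pairwise distinct non-members of size \<noteq> 2, 3, whereas every
3-element member is unmatched "downward". Comparing with the 2^m subsets of the universe yields
  m n + n + C(m,2) + C(m,3) \<le> 2 \<Sigma>_x |{A. x \<in> A}| + 2^m,
and n > 2^(m-1) turns this into an average frequency of at least 6n/13.
\<close>

definition up_missing :: "'a set set \<Rightarrow> 'a \<Rightarrow> 'a set set" where
  "up_missing F x = {B\<in>F. x \<notin> B \<and> insert x B \<notin> F}"

definition down_missing :: "'a set set \<Rightarrow> 'a \<Rightarrow> 'a set set" where
  "down_missing F x = {A\<in>F. x \<in> A \<and> A - {x} \<notin> F}"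

lemma union_closed_card_le_frequency_pair:
  assumes "finite F" and "union_closed F" and "{x, y} \<in> F"
  shows "card F \<le> card {A\<in>F. x \<in> A} + card {A\<in>F. y \<in> A}"
proof -
  define Fx where "Fx = {A\<in>F. x \<in> A}"
  define Fy where "Fy = {A\<in>F. y \<in> A}"
  define F0 where "F0 = {A\<in>F. x \<notin> A \<and> y \<notin> A}"
  have fin: "finite Fx" "finite Fy" "finite F0"
    using assms(1) by (auto simp: Fx_def Fy_def F0_def)
  have "card F = card (Fx \<union> Fy) + card F0"
  proof -
    have "F = (Fx \<union> Fy) \<union> F0" "(Fx \<union> Fy) \<inter> F0 = {}"
      by (auto simp: Fx_def Fy_def F0_def)
    then show ?thesis using fin by (simp add: card_Un_disjoint)
  qed
  moreover have "card F0 \<le> card (Fx \<inter> Fy)"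
  proof (rule card_inj_on_le)
    show "inj_on (\<lambda>A. A \<union> {x, y}) F0"
      unfolding inj_on_def F0_def by blast
    show "(\<lambda>A. A \<union> {x, y}) ` F0 \<subseteq> Fx \<inter> Fy"
      using assms(2,3) by (auto simp: union_closed_def F0_def Fx_def Fy_def)
  qed (use fin in auto)
  ultimately show ?thesis
    using card_Un_Int[OF fin(1,2)] by (simp add: Fx_def Fy_def)
qed

lemma union_closed_small_member_frequency:
  assumes "finite F" and "union_closed F" and "S \<in> F" and "card S = 1 \<or> card S = 2"
  shows "\<exists>x\<in>S. card F \<le> 2 * card {A\<in>F. x \<in> A}"
proof -
  obtain x y where S: "S = {x, y}"
    using assms(4) by (metis card_1_singletonE card_2_iff insert_absorb2)
  with assms(3) have "card F \<le> card {A\<in>F. x \<in> A} + card {A\<in>F. y \<in> A}"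
    by (intro union_closed_card_le_frequency_pair[OF assms(1,2)]) simp
  then have "card F \<le> 2 * card {A\<in>F. x \<in> A} \<or> card F \<le> 2 * card {A\<in>F. y \<in> A}"
    by linarith
  then show ?thesis using S by blast
qed

lemma card_lacking_add_down_missing:
  assumes "finite F"
  shows "card {A\<in>F. x \<notin> A} + card (down_missing F x)
           = card {A\<in>F. x \<in> A} + card (up_missing F x)"
proof -
  have "bij_betw (insert x)
          ({A\<in>F. x \<notin> A} - up_missing F x) ({A\<in>F. x \<in> A} - down_missing F x)"
    by (rule bij_betw_byWitness[where f' = "\<lambda>A. A - {x}"])
      (auto simp: up_missing_def down_missing_def insert_absorb)
  then have "card ({A\<in>F. x \<notin> A} - up_missing F x)
      = card ({A\<in>F. x \<in> A} - down_missing F x)"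
    by (rule bij_betw_same_card)
  moreover have sub: "up_missing F x \<subseteq> {A\<in>F. x \<notin> A}" "down_missing F x \<subseteq> {A\<in>F. x \<in> A}"
    by (auto simp: up_missing_def down_missing_def)
  moreover from sub have "card (up_missing F x) \<le> card {A\<in>F. x \<notin> A}"
    "card (down_missing F x) \<le> card {A\<in>F. x \<in> A}"
    using assms by (auto intro: card_mono)
  ultimately show ?thesis
    using assms by (simp add: card_Diff_subset finite_subset)
qed

lemma union_closed_inj_on_insert_up_missing:
  assumes "union_closed F"
  shows "inj_on (\<lambda>(x, B). insert x B) (SIGMA x:X. up_missing F x)"
proof (rule inj_onI, clarsimp)
  fix x B x' B'
  assume B: "B \<in> up_missing F x" and B': "B' \<in> up_missing F x'"
    and eq: "insert x B = insert x' B'"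
  show "x = x' \<and> B = B'"
  proof (cases "x = x'")
    case True
    then show ?thesis using B B' eq by (auto simp: up_missing_def insert_ident)
  next
    case False
    \<comment> \<open>then x \<in> B' and x' \<in> B, so the common value is B \<union> B'\<close>
    then have "insert x B = B \<union> B'" using B B' eq by (auto simp: up_missing_def)
    then have "insert x B \<in> F" using assms B B' by (auto simp: union_closed_def up_missing_def)
    then show ?thesis using B by (simp add: up_missing_def)
  qed
qed

lemma card_Sigma_up_missing_bound:
  assumes "finite (\<Union>F)" and "union_closed F"
    and small: "\<forall>A\<in>F. card A \<noteq> 1 \<and> card A \<noteq> 2" and m: "card (\<Union>F) = m"
  shows "card (SIGMA x:\<Union>F. up_missing F x) + card F + (m choose 2) + (m choose 3)
           \<le> 2 ^ m + card {A\<in>F. card A = 3}"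
proof -
  define U where "U = \<Union>F"
  define K where "K k = {C. C \<subseteq> U \<and> card C = k}" for k
  define I where "I = (\<lambda>(x, B). insert x B) ` (SIGMA x:U. up_missing F x)"
  have finU: "finite U" and finF: "finite F" and FU: "F \<subseteq> Pow U"
    using assms(1) finite_UnionD by (auto simp: U_def)
  have finPow: "finite X" if "X \<subseteq> Pow U" for X
    using that finU by (simp add: finite_subset)
  have card_K: "card (K k) = m choose k" for k
    using n_subsets[OF finU] m by (simp add: K_def U_def)
  have "card I = card (SIGMA x:U. up_missing F x)"
    unfolding I_def
    by (rule card_image) (rule union_closed_inj_on_insert_up_missing[OF assms(2)])
  moreover have I: "I \<subseteq> Pow U - (F \<union> K 2 \<union> K 3)"
  proof clarsimp
    fix C assume "C \<in> I"
    then obtain x B where x: "x \<in> U" and B: "B \<in> up_missing F x" and C: "C = insert x B"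
      by (auto simp: I_def)
    have "B \<in> F" "x \<notin> B" using B by (auto simp: up_missing_def)
    moreover have "finite B" using \<open>B \<in> F\<close> FU finU by (auto intro: finite_subset)
    ultimately have "card C = Suc (card B)" "card B \<noteq> 1" "card B \<noteq> 2"
      using C small by auto
    then show "C \<subseteq> U \<and> C \<notin> F \<and> C \<notin> K 2 \<and> C \<notin> K 3"
      using x B C FU by (auto simp: up_missing_def K_def)
  qed
  moreover have "card (F \<union> K 2 \<union> K 3) + card {A\<in>F. card A = 3}
      = card F + card (K 2) + card (K 3)"
  proof -
    have finK: "finite (K k)" for k by (rule finPow) (auto simp: K_def)
    have "(F \<union> K 3) \<inter> K 2 = {}" using small by (auto simp: K_def)
    then have "card (F \<union> K 2 \<union> K 3) = card (F \<union> K 3) + card (K 2)"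
      using finF finK card_Un_disjoint[of "F \<union> K 3" "K 2"] by (simp add: Un_ac)
    moreover have "{A\<in>F. card A = 3} = F \<inter> K 3" using FU by (auto simp: K_def)
    ultimately show ?thesis using card_Un_Int[OF finF finK[of 3]] by simp
  qed
  moreover have "card I + card (F \<union> K 2 \<union> K 3) \<le> 2 ^ m"
  proof -
    have "F \<union> K 2 \<union> K 3 \<subseteq> Pow U" using FU by (auto simp: K_def)
    then have "card (I \<union> (F \<union> K 2 \<union> K 3)) = card I + card (F \<union> K 2 \<union> K 3)"
      using I by (intro card_Un_disjoint finPow) auto
    moreover have "card (I \<union> (F \<union> K 2 \<union> K 3)) \<le> card (Pow U)"
      using I \<open>F \<union> K 2 \<union> K 3 \<subseteq> Pow U\<close> finU by (intro card_mono) auto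
    ultimately show ?thesis using finU m by (simp add: card_Pow U_def)
  qed
  ultimately show ?thesis using card_K by (simp add: U_def)
qed

lemma card_three_members_le_down_missing:
  assumes "finite (\<Union>F)" and no_pairs: "\<forall>A\<in>F. card A \<noteq> 2"
  shows "card {A\<in>F. card A = 3} \<le> card (SIGMA x:\<Union>F. down_missing F x)"
proof -
  have "finite F" using assms(1) by (rule finite_UnionD)
  then have fin: "finite (SIGMA x:\<Union>F. down_missing F x)"
    using assms(1) by (auto simp: down_missing_def)
  have "{A\<in>F. card A = 3} \<subseteq> snd ` (SIGMA x:\<Union>F. down_missing F x)"
  proof
    fix A assume "A \<in> {A\<in>F. card A = 3}"
    then have A: "A \<in> F" "card A = 3" by auto
    then obtain x where x: "x \<in> A" by fastforce
    have "finite A" using A(1) assms(1) by (auto intro: finite_subset)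
    then have "card (A - {x}) = 2" using A(2) x by simp
    then have "A - {x} \<notin> F" using no_pairs by auto
    then have "(x, A) \<in> (SIGMA x:\<Union>F. down_missing F x)"
      using A(1) x by (auto simp: down_missing_def)
    then show "A \<in> snd ` (SIGMA x:\<Union>F. down_missing F x)"
      by (rule rev_image_eqI) simp
  qed
  then show ?thesis
    using fin by (meson card_image_le card_mono finite_imageI order_trans)
qed

lemma union_closed_frequency_sum_lower_bound:
  assumes "finite (\<Union>F)" and "union_closed F"
    and small: "\<forall>A\<in>F. card A \<noteq> 1 \<and> card A \<noteq> 2" and m: "card (\<Union>F) = m"
  shows "m * card F + card F + (m choose 2) + (m choose 3)
           \<le> 2 * (\<Sum>x\<in>\<Union>F. card {A\<in>F. x \<in> A}) + 2 ^ m"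
proof -
  have finF: "finite F" using assms(1) by (rule finite_UnionD)
  have "(\<Sum>x\<in>\<Union>F. card {A\<in>F. x \<notin> A}) + card (SIGMA x:\<Union>F. down_missing F x)
      = (\<Sum>x\<in>\<Union>F. card {A\<in>F. x \<in> A}) + card (SIGMA x:\<Union>F. up_missing F x)"
  proof -
    have "finite (down_missing F x)" "finite (up_missing F x)" for x
      using finF by (simp_all add: up_missing_def down_missing_def)
    then show ?thesis
      using assms(1) card_lacking_add_down_missing[OF finF] by (simp flip: sum.distrib)
  qed
  moreover have "(\<Sum>x\<in>\<Union>F. card {A\<in>F. x \<notin> A}) + (\<Sum>x\<in>\<Union>F. card {A\<in>F. x \<in> A})
      = m * card F"
  proof -
    have "card {A\<in>F. x \<notin> A} + card {A\<in>F. x \<in> A} = card F" for x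
    proof -
      have "F = {A\<in>F. x \<notin> A} \<union> {A\<in>F. x \<in> A}" by blast
      then show ?thesis using finF by (metis (no_types, lifting) card_Un_disjoint
            disjoint_iff finite_Un mem_Collect_eq)
    qed
    then show ?thesis using m by (simp flip: sum.distrib)
  qed
  moreover have "card {A\<in>F. card A = 3} \<le> card (SIGMA x:\<Union>F. down_missing F x)"
    by (rule card_three_members_le_down_missing[OF assms(1)]) (use small in blast)
  ultimately show ?thesis using card_Sigma_up_missing_bound[OF assms] by linarith
qed

lemma compact_count_bound_imp_six_thirteenths:
  fixes m n s :: nat
  assumes "m \<ge> 1" and "2 ^ (m - 1) < n"
    and count: "m * n + n + (m choose 2) + (m choose 3) \<le> 2 * s + 2 ^ m"
  shows "6 * (m * n) \<le> 13 * s"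
proof -
  have "13 * 2 ^ m + 12 * (m * n) \<le> 13 * (m * n + n + (m choose 2) + (m choose 3))"
  proof (cases "m \<ge> 13")
    case True
    have "(2::nat) ^ m = 2 * 2 ^ (m - 1)" using assms(1) by (simp flip: power_Suc)
    then have "13 * 2 ^ m \<le> m * n + 13 * n"
      using True assms(2) mult_le_mono1[of 13 m n] by linarith
    then show ?thesis by simp
  next
    case False
    then have "m = 1 \<or> m = 2 \<or> m = 3 \<or> m = 4 \<or> m = 5 \<or> m = 6 \<or> m = 7 \<or> m = 8 \<or> m = 9
        \<or> m = 10 \<or> m = 11 \<or> m = 12"
      using assms(1) by presburger
    then show ?thesis using assms(2)
      by (elim disjE) (simp_all add: binomial_code fold_atLeastAtMost_nat.simps fact_numeral)
  qed
  moreover have "13 * (m * n + n + (m choose 2) + (m choose 3)) \<le> 13 * (2 * s + 2 ^ m)"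
    using count by (rule mult_le_mono2)
  ultimately show ?thesis unfolding distrib_left by linarith
qed

lemma exists_ge_average:
  fixes f :: "'a \<Rightarrow> real"
  assumes "finite X" and "real (card X) * c \<le> sum f X" and "X \<noteq> {}"
  shows "\<exists>x\<in>X. c \<le> f x"
  using sum_bounded_above_strict[of X f c] assms by (meson card_gt_0_iff not_le)

theorem mainTheorem3:
  fixes F :: "'a set set"
  assumes "finite F"
    and "\<forall>A\<in>F. finite A"
    and "union_closed F"
    and "card (\<Union>F) = m"
    and "m \<ge> 1"
    and "2 ^ (m - 1) < card F"
    and "card F \<le> 2 ^ m"
  shows "\<exists>x\<in>\<Union>F. real (card {A\<in>F. x \<in> A}) \<ge> 6 / 13 * real (card F)"
  \<comment> \<open>the bound card F \<le> 2 ^ m is automatic and not needed\<close>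
proof (cases "\<exists>S\<in>F. card S = 1 \<or> card S = 2")
  case True
  then obtain S x where "S \<in> F" "x \<in> S" "card F \<le> 2 * card {A\<in>F. x \<in> A}"
    using union_closed_small_member_frequency[OF assms(1,3)] by blast
  then have "x \<in> \<Union>F" and "real (card F) \<le> 2 * real (card {A\<in>F. x \<in> A})"
    by auto
  then show ?thesis by (intro bexI[of _ x]) linarith
next
  case False
  have finU: "finite (\<Union>F)" using assms(1,2) by blast
  have "\<forall>A\<in>F. card A \<noteq> 1 \<and> card A \<noteq> 2" using False by blast
  from union_closed_frequency_sum_lower_bound[OF finU assms(3) this assms(4)]
  have "6 * (m * card F) \<le> 13 * (\<Sum>x\<in>\<Union>F. card {A\<in>F. x \<in> A})"
    by (rule compact_count_bound_imp_six_thirteenths[OF assms(5,6)])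
  then have "real (6 * (m * card F)) \<le> real (13 * (\<Sum>x\<in>\<Union>F. card {A\<in>F. x \<in> A}))"
    by (simp only: of_nat_le_iff)
  then have "real (card (\<Union>F)) * (6 / 13 * real (card F))
      \<le> (\<Sum>x\<in>\<Union>F. real (card {A\<in>F. x \<in> A}))"
    using assms(4) by (simp add: of_nat_sum)
  with finU show ?thesis
    by (rule exists_ge_average) (metis assms(4,5) card.empty not_one_le_zero)
qed

end
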